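(* For every positive integer $n$: (a) $\mathcal{J}^*_6(2n)$ and $\mathcal{J}_6(2n)$ are even; (b) $\mathcal{J}_6(4n+1)$ is even; (c) $\mathcal{J}^*_6(24n+11)$, $\mathcal{J}^*_6(24n+19)$, $\mathcal{J}_6(24n+11)$ and $\mathcal{J}_6(24n+19)$ are even; (d) $\mathcal{J}^*_6(4n-1)\equiv \mathcal{J}_6(4n-1)\pmod 2$; (e) $\mathcal{J}^*_6(8n+1)\equiv \mathcal{J}_6(24n+3)\pmod 2$.
   Context: Let $q=e^{2\pi i\tau}$, $(a;q)_\infty=\prod_{j\ge0}(1-aq^j)$, and $\eta(\tau)=q^{1/24}(q;q)_\infty$. Define the Hauptmoduln $$j_6(\tau)=\left(\frac{\eta(2\tau)\eta(3\tau)^3}{\eta(\tau)\eta(6\tau)^3}\right)^3-3=\frac1q+\sum_{n\ge0}\mathcal{J}_6(n)q^n,$$ $$j_6^{*}(\tau)=\left(\frac{\eta(\tau)\eta(3\tau)}{\eta(2\tau)\eta(6\tau)}\right)^6+6+2^6\left(\frac{\eta(2\tau)\eta(6\tau)}{\eta(\tau)\eta(3\tau)}\right)^6 = \frac1q+\sum_{n\ge 0}\mathcal{J}^*_6(n)q^n.$$ *)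

theory Defs
  imports "HOL-Computational_Algebra.Formal_Power_Series"
begin

text \<open>The q-Pochhammer symbol (q^k;q^k)_infinity = prod_{j>=1} (1 - q^(k j)) as a formal
  power series in q.  For k >= 1 the coefficient of q^m only depends on the factors
  with j <= m, so it is the m-th coefficient of the finite product over j in {1..m}.\<close>
definition qpoch :: "nat \<Rightarrow> rat fps" where
  "qpoch k = Abs_fps (\<lambda>m. fps_nth (\<Prod>j\<in>{1..m}. (1 - fps_X ^ (k * j))) m)"

text \<open>q * (j_6 + 3) = ( (q^2;q^2)(q^3;q^3)^3 / ((q;q)(q^6;q^6)^3) )^3\<close>
definition j6_series :: "rat fps" where
  "j6_series = (qpoch 2 * qpoch 3 ^ 3 * inverse (qpoch 1 * qpoch 6 ^ 3)) ^ 3"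

text \<open>P = (q;q)(q^3;q^3)/((q^2;q^2)(q^6;q^6));  q * j_6^* = P^6 + 6 q + 64 q^2 P^(-6)\<close>
definition P6 :: "rat fps" where
  "P6 = qpoch 1 * qpoch 3 * inverse (qpoch 2 * qpoch 6)"

definition j6star_series :: "rat fps" where
  "j6star_series = P6 ^ 6 + 6 * fps_X + 64 * fps_X ^ 2 * inverse (P6 ^ 6)"

text \<open>Coefficients: j_6 = 1/q + sum_{n>=0} J6 n q^n, and similarly for j_6^*.\<close>
definition J6 :: "nat \<Rightarrow> rat" where
  "J6 n = fps_nth j6_series (n + 1) - (if n = 0 then 3 else 0)"

definition J6star :: "nat \<Rightarrow> rat" where
  "J6star n = fps_nth j6star_series (n + 1)"

end

theory Submission
  imports Defs "HOL-Library.Z2"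
begin

text \<open>Everything is reduced modulo 2, i.e. to power series over GF(2), where Frobenius gives
  (q^k;q^k)^2 = (q^2k;q^2k).  Write a = (q;q) and c = (q^3;q^3).  Euler's pentagonal theorem
  (via Shanks' finite form) and an involution on the odd representations of 24n+4 by 3x^2+y^2
  give Gauss's identity a * \<Sum> q^(k(k+1)/2) = a^4, so the triangular series is a^3 mod 2.
  Splitting the triangular numbers by their residue mod 3 yields a^3 = c + q (q^9;q^9)^3, and
  from this (ac)^3 = a^12 + q c^12.  Hence, with C = a^3/c^3, modulo 2
  q (j_6 + 3) = C(q^4) + q  and  q j_6^* = C(q^4) + q^2 / C(q^4),
  while C = 1/(q^6;q^6) + q / C(q^3).\<close>

unbundle fps_syntax
(* keep bit arithmetic as ring operations rather than xor/and *)
declare add_bit_eq_xor[simp del] mult_bit_eq_and[simp del]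

section \<open>The q-Pochhammer symbol over an arbitrary ring\<close>

definition qpoch_fps :: "nat \<Rightarrow> 'a::comm_ring_1 fps" where
  "qpoch_fps k = Abs_fps (\<lambda>m. (\<Prod>j\<in>{1..m}. (1 - fps_X ^ (k * j))) $ m)"

lemma qpoch_eq_qpoch_fps: "qpoch k = qpoch_fps k"
  by (simp add: qpoch_def qpoch_fps_def)

lemma qpoch_fps_nth_0 [simp]: "qpoch_fps k $ 0 = 1"
  by (simp add: qpoch_fps_def)

lemma qpoch_fps_nonzero: "(qpoch_fps k :: 'a::comm_ring_1 fps) \<noteq> 0"
  using qpoch_fps_nth_0[of k, where 'a='a] by (metis fps_zero_nth zero_neq_one)

definition fps_eq_upto :: "nat \<Rightarrow> 'a::comm_ring_1 fps \<Rightarrow> 'a fps \<Rightarrow> bool" where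
  "fps_eq_upto m f g \<longleftrightarrow> (\<forall>i\<le>m. f $ i = g $ i)"

lemma fps_eq_upto_refl [simp]: "fps_eq_upto m f f"
  by (simp add: fps_eq_upto_def)

lemma fps_eq_upto_trans: "fps_eq_upto m f g \<Longrightarrow> fps_eq_upto m g h \<Longrightarrow> fps_eq_upto m f h"
  by (simp add: fps_eq_upto_def)

lemma fps_eq_upto_mult:
  assumes "fps_eq_upto m f f'" "fps_eq_upto m g g'"
  shows "fps_eq_upto m (f * g) (f' * g')"
  using assms unfolding fps_eq_upto_def fps_mult_nth by (auto intro!: sum.cong)

lemma fps_eq_upto_power: "fps_eq_upto m f g \<Longrightarrow> fps_eq_upto m (f ^ n) (g ^ n)"
  by (induction n) (auto intro: fps_eq_upto_mult)

lemma fps_eq_upto_mult_one_minus_X_power: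
  "m < s \<Longrightarrow> fps_eq_upto m (f * (1 - fps_X ^ s)) f"
  unfolding fps_eq_upto_def by (auto simp: algebra_simps fps_X_power_mult_right_nth)

lemma fps_eq_upto_qprod_truncate:
  assumes "k \<ge> 1" "m \<le> M"
  shows "fps_eq_upto m (\<Prod>j\<in>{1..M}. (1 - fps_X ^ (k * j)) :: 'a::comm_ring_1 fps)
           (\<Prod>j\<in>{1..m}. (1 - fps_X ^ (k * j)))"
  using assms(2)
proof (induction M rule: dec_induct)
  case base
  then show ?case by simp
next
  case (step M)
  have "m < k * Suc M"
    using step.hyps assms(1) mult_le_mono1[of 1 k "Suc M"] by simp
  then have "fps_eq_upto m ((\<Prod>j\<in>{1..M}. (1 - fps_X ^ (k * j)) :: 'a fps) * (1 - fps_X ^ (k * Suc M)))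
               (\<Prod>j\<in>{1..M}. (1 - fps_X ^ (k * j)))"
    by (rule fps_eq_upto_mult_one_minus_X_power)
  then show ?case
    using fps_eq_upto_trans step.IH by simp
qed

lemma qpoch_fps_eq_upto_prod:
  assumes "k \<ge> 1" "m \<le> M"
  shows "fps_eq_upto m (qpoch_fps k) (\<Prod>j\<in>{1..M}. (1 - fps_X ^ (k * j)) :: 'a::comm_ring_1 fps)"
  unfolding fps_eq_upto_def
proof (intro allI impI)
  fix i assume "i \<le> m"
  then show "qpoch_fps k $ i = (\<Prod>j\<in>{1..M}. (1 - fps_X ^ (k * j)) :: 'a fps) $ i"
    using fps_eq_upto_qprod_truncate[of k i M, where 'a='a] assms
    by (simp add: qpoch_fps_def fps_eq_upto_def)
qed

section \<open>Reduction modulo 2\<close>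

definition int_coeffs :: "rat fps \<Rightarrow> bool" where
  "int_coeffs f \<longleftrightarrow> (\<forall>n. f $ n \<in> \<int>)"

definition mod2_fps :: "rat fps \<Rightarrow> bit fps" where
  "mod2_fps f = Abs_fps (\<lambda>n. of_int \<lfloor>f $ n\<rfloor>)"

lemma mod2_fps_nth: "mod2_fps f $ n = of_int \<lfloor>f $ n\<rfloor>"
  by (simp add: mod2_fps_def)

lemma int_coeffs_add: "int_coeffs f \<Longrightarrow> int_coeffs g \<Longrightarrow> int_coeffs (f + g)"
  unfolding int_coeffs_def by (auto intro!: Ints_add)

lemma int_coeffs_diff: "int_coeffs f \<Longrightarrow> int_coeffs g \<Longrightarrow> int_coeffs (f - g)"
  unfolding int_coeffs_def by (auto intro!: Ints_diff)

lemma int_coeffs_mult: "int_coeffs f \<Longrightarrow> int_coeffs g \<Longrightarrow> int_coeffs (f * g)"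
  unfolding int_coeffs_def fps_mult_nth by (blast intro: Ints_mult)

lemma int_coeffs_one [simp]: "int_coeffs 1"
  unfolding int_coeffs_def by simp

lemma int_coeffs_X_power [simp]: "int_coeffs (fps_X ^ s)"
  unfolding int_coeffs_def by simp

lemma int_coeffs_numeral [simp]: "int_coeffs (numeral k)"
  unfolding int_coeffs_def numeral_fps_const by simp

lemma int_coeffs_power: "int_coeffs f \<Longrightarrow> int_coeffs (f ^ n)"
  by (induction n) (auto intro: int_coeffs_mult)

lemma int_coeffs_prod: "(\<And>x. x \<in> A \<Longrightarrow> int_coeffs (f x)) \<Longrightarrow> int_coeffs (\<Prod>x\<in>A. f x)"
  by (induction A rule: infinite_finite_induct) (auto intro: int_coeffs_mult)

lemma int_coeffs_inverse:
  assumes "int_coeffs f" "f $ 0 = 1"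
  shows "int_coeffs (inverse f)"
proof -
  have "inverse f $ n \<in> \<int>" for n
  proof (induction n rule: less_induct)
    case (less n)
    show ?case
    proof (cases n)
      case (Suc m)
      have "0 = (f * inverse f) $ n"
        using assms(2) Suc by (simp add: inverse_mult_eq_1')
      also have "\<dots> = inverse f $ n + (\<Sum>i=Suc 0..n. f $ i * inverse f $ (n - i))"
        using assms(2) by (simp add: fps_mult_nth sum.atLeast_Suc_atMost)
      finally have "inverse f $ n = - (\<Sum>i=Suc 0..n. f $ i * inverse f $ (n - i))"
        by (simp add: eq_neg_iff_add_eq_0)
      moreover have "(\<Sum>i=Suc 0..n. f $ i * inverse f $ (n - i)) \<in> \<int>"
        using assms(1) less Suc by (intro Ints_sum Ints_mult) (auto simp: int_coeffs_def)
      ultimately show ?thesis by simp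
    qed (use assms in simp)
  qed
  then show ?thesis by (simp add: int_coeffs_def)
qed

lemma mod2_fps_add:
  assumes "int_coeffs f" "int_coeffs g"
  shows "mod2_fps (f + g) = mod2_fps f + mod2_fps g"
proof (rule fps_ext)
  fix n
  have "(f + g) $ n = of_int (\<lfloor>f $ n\<rfloor> + \<lfloor>g $ n\<rfloor>)"
    using assms by (simp add: int_coeffs_def)
  then have "\<lfloor>(f + g) $ n\<rfloor> = \<lfloor>f $ n\<rfloor> + \<lfloor>g $ n\<rfloor>"
    by simp
  then show "mod2_fps (f + g) $ n = (mod2_fps f + mod2_fps g) $ n"
    by (simp add: mod2_fps_nth)
qed

lemma mod2_fps_diff:
  assumes "int_coeffs f" "int_coeffs g"
  shows "mod2_fps (f - g) = mod2_fps f - mod2_fps g"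
proof (rule fps_ext)
  fix n
  have "(f - g) $ n = of_int (\<lfloor>f $ n\<rfloor> - \<lfloor>g $ n\<rfloor>)"
    using assms by (simp add: int_coeffs_def)
  then have "\<lfloor>(f - g) $ n\<rfloor> = \<lfloor>f $ n\<rfloor> - \<lfloor>g $ n\<rfloor>"
    by simp
  then show "mod2_fps (f - g) $ n = (mod2_fps f - mod2_fps g) $ n"
    by (simp add: mod2_fps_nth)
qed

lemma mod2_fps_mult:
  assumes "int_coeffs f" "int_coeffs g"
  shows "mod2_fps (f * g) = mod2_fps f * mod2_fps g"
proof (rule fps_ext)
  fix n
  have "(f * g) $ n = of_int (\<Sum>i=0..n. \<lfloor>f $ i\<rfloor> * \<lfloor>g $ (n - i)\<rfloor>)"
    using assms by (simp add: fps_mult_nth int_coeffs_def)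
  then have "\<lfloor>(f * g) $ n\<rfloor> = (\<Sum>i=0..n. \<lfloor>f $ i\<rfloor> * \<lfloor>g $ (n - i)\<rfloor>)"
    by (simp only: floor_of_int)
  then show "mod2_fps (f * g) $ n = (mod2_fps f * mod2_fps g) $ n"
    by (simp add: mod2_fps_nth fps_mult_nth)
qed

lemma mod2_fps_one [simp]: "mod2_fps 1 = 1"
  by (rule fps_ext) (simp add: mod2_fps_nth)

lemma mod2_fps_X_power [simp]: "mod2_fps (fps_X ^ s) = fps_X ^ s"
  by (rule fps_ext) (simp add: mod2_fps_nth)

lemma mod2_fps_numeral [simp]: "mod2_fps (numeral k) = fps_const (numeral k)"
  by (rule fps_ext) (simp add: mod2_fps_nth numeral_fps_const)

lemma mod2_fps_power: "int_coeffs f \<Longrightarrow> mod2_fps (f ^ n) = mod2_fps f ^ n"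
  by (induction n) (auto simp: mod2_fps_mult int_coeffs_power)

lemma mod2_fps_prod:
  "(\<And>x. x \<in> A \<Longrightarrow> int_coeffs (f x)) \<Longrightarrow> mod2_fps (\<Prod>x\<in>A. f x) = (\<Prod>x\<in>A. mod2_fps (f x))"
  by (induction A rule: infinite_finite_induct) (auto simp: mod2_fps_mult int_coeffs_prod)

lemma mod2_fps_inverse:
  assumes "int_coeffs f" "f $ 0 = 1"
  shows "mod2_fps (inverse f) = inverse (mod2_fps f)"
proof -
  have "mod2_fps f * mod2_fps (inverse f) = mod2_fps (f * inverse f)"
    by (rule mod2_fps_mult[OF assms(1) int_coeffs_inverse[OF assms], symmetric])
  also have "\<dots> = 1"
    using assms(2) by (simp add: inverse_mult_eq_1')
  finally show ?thesis
    by (metis fps_inverse_unique)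
qed

lemma of_int_bit: "(of_int i :: bit) = (if even i then 0 else 1)"
  by (cases "even i") (auto elim!: evenE oddE)

lemma half_in_Ints_iff_mod2:
  fixes x :: rat
  assumes "x \<in> \<int>"
  shows "x / 2 \<in> \<int> \<longleftrightarrow> (of_int \<lfloor>x\<rfloor> :: bit) = 0"
proof -
  obtain i where x: "x = of_int i"
    using assms by (auto elim: Ints_cases)
  have "(of_int i / 2 :: rat) \<in> \<int> \<longleftrightarrow> even i"
  proof
    assume "(of_int i / 2 :: rat) \<in> \<int>"
    then obtain j where "(of_int i / 2 :: rat) = of_int j"
      by (auto elim: Ints_cases)
    then have "i = 2 * j"
      by (simp add: field_simps flip: of_int_eq_iff)
    then show "even i" by simp
  qed (auto elim: evenE)
  then show ?thesis
    unfolding x floor_of_int of_int_bit by simp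
qed

lemma half_coeff_in_Ints_iff:
  "int_coeffs f \<Longrightarrow> f $ m / 2 \<in> \<int> \<longleftrightarrow> mod2_fps f $ m = 0"
  by (simp add: half_in_Ints_iff_mod2 mod2_fps_nth int_coeffs_def)

lemma half_coeff_diff_in_Ints_iff:
  assumes "int_coeffs f" "int_coeffs g"
  shows "(f $ m - g $ k) / 2 \<in> \<int> \<longleftrightarrow> mod2_fps f $ m = mod2_fps g $ k"
proof -
  obtain x y where xy: "f $ m = of_int x" "g $ k = of_int y"
    using assms unfolding int_coeffs_def by (metis Ints_cases)
  then have "(f $ m - g $ k) / 2 \<in> \<int> \<longleftrightarrow> (of_int (x - y) :: bit) = 0"
    using half_in_Ints_iff_mod2[of "f $ m - g $ k"] by simp
  also have "\<dots> \<longleftrightarrow> (of_int x :: bit) = of_int y"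
    by (simp add: of_int_bit)
  finally show ?thesis
    using xy by (simp add: mod2_fps_nth)
qed

section \<open>Dilation \<open>q \<mapsto> q\<^sup>r\<close>\<close>

definition fps_dilate :: "nat \<Rightarrow> 'a::comm_ring_1 fps \<Rightarrow> 'a fps" where
  "fps_dilate r f = f oo fps_X ^ r"

lemma fps_dilate_nth:
  assumes "r \<ge> 1"
  shows "fps_dilate r f $ n = (if r dvd n then f $ (n div r) else 0)"
proof -
  have "fps_dilate r f $ n = (\<Sum>i=0..n. f $ i * (if n = r * i then 1 else 0))"
    unfolding fps_dilate_def fps_compose_nth by (simp add: power_mult [symmetric])
  also have "\<dots> = (\<Sum>i=0..n. if r dvd n \<and> i = n div r then f $ i else 0)"
    using assms by (intro sum.cong) auto
  also have "\<dots> = (if r dvd n then f $ (n div r) else 0)"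
    using assms by simp
  finally show ?thesis .
qed

lemma fps_dilate_add: "fps_dilate r (f + g) = fps_dilate r f + fps_dilate r g"
  unfolding fps_dilate_def by (rule fps_compose_add_distrib)

lemma fps_dilate_diff: "fps_dilate r (f - g) = fps_dilate r f - fps_dilate r g"
  unfolding fps_dilate_def by (rule fps_compose_sub_distrib)

lemma fps_dilate_one [simp]: "fps_dilate r 1 = 1"
  unfolding fps_dilate_def by simp

lemma fps_dilate_mult:
  "r \<ge> 1 \<Longrightarrow> fps_dilate r (f * g) = fps_dilate r f * fps_dilate r (g :: 'a::idom fps)"
  unfolding fps_dilate_def by (rule fps_compose_mult_distrib) simp

lemma fps_dilate_power:
  "r \<ge> 1 \<Longrightarrow> fps_dilate r (f ^ n) = fps_dilate r (f :: 'a::idom fps) ^ n"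
  unfolding fps_dilate_def by (rule fps_compose_power [symmetric]) simp

lemma fps_dilate_prod:
  "r \<ge> 1 \<Longrightarrow> fps_dilate r (\<Prod>x\<in>A. f x) = (\<Prod>x\<in>A. fps_dilate r (f x :: 'a::idom fps))"
  unfolding fps_dilate_def by (rule fps_compose_prod_distrib) simp

lemma fps_dilate_X: "r \<ge> 1 \<Longrightarrow> fps_dilate r fps_X = (fps_X :: 'a::comm_ring_1 fps) ^ r"
  unfolding fps_dilate_def by (rule fps_X_fps_compose_startby0) simp

lemma fps_dilate_X_power:
  "r \<ge> 1 \<Longrightarrow> fps_dilate r (fps_X ^ m) = (fps_X :: 'a::idom fps) ^ (r * m)"
  by (simp add: fps_dilate_power fps_dilate_X power_mult)

lemma fps_dilate_inverse:
  assumes "r \<ge> 1" "f $ 0 \<noteq> 0"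
  shows "fps_dilate r (inverse f) = inverse (fps_dilate r (f :: 'a::field fps))"
proof -
  have "fps_dilate r f * fps_dilate r (inverse f) = fps_dilate r (f * inverse f)"
    using assms(1) by (simp add: fps_dilate_mult)
  also have "\<dots> = 1"
    using assms(2) by (simp add: inverse_mult_eq_1')
  finally show ?thesis
    by (metis fps_inverse_unique)
qed

lemma fps_dilate_qpoch_fps:
  assumes "r \<ge> 1" "k \<ge> 1"
  shows "fps_dilate r (qpoch_fps k :: 'a::idom fps) = qpoch_fps (r * k)"
proof (rule fps_ext)
  fix n
  let ?P = "(\<Prod>j\<in>{1..n}. (1 - fps_X ^ (k * j)) :: 'a fps)"
  have "fps_dilate r ?P = (\<Prod>j\<in>{1..n}. (1 - fps_X ^ (r * k * j)))"
    using assms by (simp add: fps_dilate_prod fps_dilate_diff fps_dilate_X_power mult.assoc)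
  then have "qpoch_fps (r * k) $ n = fps_dilate r ?P $ n"
    by (simp add: qpoch_fps_def)
  also have "\<dots> = (if r dvd n then qpoch_fps k $ (n div r) else 0)"
    using assms qpoch_fps_eq_upto_prod[OF assms(2), of "n div r" n, where 'a='a]
    by (simp add: fps_dilate_nth fps_eq_upto_def)
  also have "\<dots> = fps_dilate r (qpoch_fps k) $ n"
    using assms by (simp add: fps_dilate_nth)
  finally show "fps_dilate r (qpoch_fps k :: 'a fps) $ n = qpoch_fps (r * k) $ n" ..
qed

lemma fps_dilate_inverse_qpoch_fps:
  "r \<ge> 1 \<Longrightarrow> k \<ge> 1 \<Longrightarrow> fps_dilate r (inverse (qpoch_fps k) :: 'a::field fps) = inverse (qpoch_fps (r * k))"
  by (simp add: fps_dilate_inverse fps_dilate_qpoch_fps)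

section \<open>Power series over GF(2)\<close>

lemma bit_fps_two [simp]: "(2 :: bit fps) = 0"
  by (simp add: numeral_fps_const)

lemma bit_fps_add_self [simp]: "(f :: bit fps) + f = 0"
  by (metis mult_2 bit_fps_two mult_zero_left)

lemma bit_fps_diff: "(f :: bit fps) - g = f + g"
  by (rule fps_ext) simp

lemma bit_fps_add_eq_0_iff: "(f :: bit fps) + g = 0 \<longleftrightarrow> f = g"
  by (metis add.assoc add.right_neutral bit_fps_add_self)

lemma bit_fps_square_add: "((f :: bit fps) + g) ^ 2 = f ^ 2 + g ^ 2"
proof -
  have "(f + g) ^ 2 = f ^ 2 + g ^ 2 + 2 * (f * g)"
    by (simp add: power2_eq_square algebra_simps)
  then show ?thesis by simp
qed

lemma qpoch_fps_square_mod2: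
  assumes "k \<ge> 1"
  shows "(qpoch_fps k :: bit fps) ^ 2 = qpoch_fps (2 * k)"
proof (rule fps_ext)
  fix m
  let ?P = "\<lambda>k. (\<Prod>j\<in>{1..m}. (1 - fps_X ^ (k * j)) :: bit fps)"
  have "fps_eq_upto m (qpoch_fps k ^ 2) (?P k ^ 2)"
    by (intro fps_eq_upto_power qpoch_fps_eq_upto_prod assms order.refl)
  moreover have "?P k ^ 2 = ?P (2 * k)"
  proof -
    have "(1 - fps_X ^ (k * j) :: bit fps) ^ 2 = 1 - fps_X ^ (2 * k * j)" for j
      by (simp add: bit_fps_diff bit_fps_square_add flip: power_mult)
    moreover have "?P k ^ 2 = (\<Prod>j\<in>{1..m}. (1 - fps_X ^ (k * j)) ^ 2)"
      by (simp add: prod_power_distrib)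
    ultimately show ?thesis
      by simp
  qed
  ultimately show "qpoch_fps k ^ 2 $ m = (qpoch_fps (2 * k) :: bit fps) $ m"
    by (simp add: fps_eq_upto_def qpoch_fps_def)
qed

lemma qpoch_fps_even_mod2:
  "(qpoch_fps 2 :: bit fps) = qpoch_fps 1 ^ 2" "(qpoch_fps 4 :: bit fps) = qpoch_fps 1 ^ 4"
  "(qpoch_fps 6 :: bit fps) = qpoch_fps 3 ^ 2" "(qpoch_fps 12 :: bit fps) = qpoch_fps 3 ^ 4"
proof -
  show two: "(qpoch_fps 2 :: bit fps) = qpoch_fps 1 ^ 2"
    and six: "(qpoch_fps 6 :: bit fps) = qpoch_fps 3 ^ 2"
    using qpoch_fps_square_mod2[of 1] qpoch_fps_square_mod2[of 3] by simp_all
  show "(qpoch_fps 4 :: bit fps) = qpoch_fps 1 ^ 4" "(qpoch_fps 12 :: bit fps) = qpoch_fps 3 ^ 4"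
    using qpoch_fps_square_mod2[of 2] qpoch_fps_square_mod2[of 6] two six
    by (simp_all flip: power_mult)
qed

section \<open>Generating series of index sets over GF(2)\<close>

definition gf2_series :: "('i \<Rightarrow> nat) \<Rightarrow> 'i set \<Rightarrow> bit fps" where
  "gf2_series f I = Abs_fps (\<lambda>n. of_nat (card {i\<in>I. f i = n}))"

definition finite_fibres :: "('i \<Rightarrow> nat) \<Rightarrow> 'i set \<Rightarrow> bool" where
  "finite_fibres f I \<longleftrightarrow> (\<forall>n. finite {i\<in>I. f i = n})"

lemma gf2_series_nth: "gf2_series f I $ n = of_nat (card {i\<in>I. f i = n})"
  by (simp add: gf2_series_def)

lemma finite_fibres_finite: "finite I \<Longrightarrow> finite_fibres f I"
  by (simp add: finite_fibres_def)

lemma finite_fibres_subset: "finite_fibres f I \<Longrightarrow> J \<subseteq> I \<Longrightarrow> finite_fibres f J"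
  unfolding finite_fibres_def by (auto intro: finite_subset[rotated])

lemma gf2_series_singleton: "gf2_series f {i} = fps_X ^ f i"
proof (rule fps_ext)
  fix n
  have "{j\<in>{i}. f j = n} = (if f i = n then {i} else {})" by auto
  then show "gf2_series f {i} $ n = fps_X ^ f i $ n"
    by (simp add: gf2_series_nth)
qed

lemma gf2_series_Un:
  assumes "I \<inter> J = {}" "finite_fibres f I" "finite_fibres f J"
  shows "gf2_series f (I \<union> J) = gf2_series f I + gf2_series f J"
proof (rule fps_ext)
  fix n
  have "{i\<in>I \<union> J. f i = n} = {i\<in>I. f i = n} \<union> {i\<in>J. f i = n}" by auto
  moreover have "card ({i\<in>I. f i = n} \<union> {i\<in>J. f i = n}) = card {i\<in>I. f i = n} + card {i\<in>J. f i = n}"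
    using assms by (intro card_Un_disjoint) (auto simp: finite_fibres_def)
  ultimately show "gf2_series f (I \<union> J) $ n = (gf2_series f I + gf2_series f J) $ n"
    by (simp add: gf2_series_nth)
qed

lemma gf2_series_reindex:
  assumes "bij_betw h J I"
  shows "gf2_series (\<lambda>j. f (h j)) J = gf2_series f I"
proof (rule fps_ext)
  fix n
  have "bij_betw h {j\<in>J. f (h j) = n} {i\<in>I. f i = n}"
    using assms unfolding bij_betw_def inj_on_def by (auto simp: image_iff)
  then show "gf2_series (\<lambda>j. f (h j)) J $ n = gf2_series f I $ n"
    by (simp add: gf2_series_nth bij_betw_same_card)
qed

lemma gf2_series_shift: "fps_X ^ c * gf2_series f I = gf2_series (\<lambda>i. f i + c) I"
proof (rule fps_ext)
  fix n
  have "{i\<in>I. f i + c = n} = (if n < c then {} else {i\<in>I. f i = n - c})" by auto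
  then show "(fps_X ^ c * gf2_series f I) $ n = gf2_series (\<lambda>i. f i + c) I $ n"
    by (simp add: fps_X_power_mult_nth gf2_series_nth)
qed

lemma fps_dilate_gf2_series:
  assumes "r \<ge> 1"
  shows "fps_dilate r (gf2_series f I) = gf2_series (\<lambda>i. r * f i) I"
proof (rule fps_ext)
  fix n
  have "{i\<in>I. r * f i = n} = (if r dvd n then {i\<in>I. f i = n div r} else {})"
    using assms by auto
  then show "fps_dilate r (gf2_series f I) $ n = gf2_series (\<lambda>i. r * f i) I $ n"
    using assms by (simp add: fps_dilate_nth gf2_series_nth)
qed

lemma gf2_series_mult:
  assumes "finite_fibres f I" "finite_fibres g J"
  shows "gf2_series f I * gf2_series g J = gf2_series (\<lambda>p. f (fst p) + g (snd p)) (I \<times> J)"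
proof (rule fps_ext)
  fix n
  let ?A = "\<lambda>a. {i\<in>I. f i = a}" and ?B = "\<lambda>b. {j\<in>J. g j = b}"
  have eq: "{p\<in>I \<times> J. f (fst p) + g (snd p) = n} = (\<Union>a\<in>{0..n}. ?A a \<times> ?B (n - a))"
    by auto
  have "card (\<Union>a\<in>{0..n}. ?A a \<times> ?B (n - a)) = (\<Sum>a=0..n. card (?A a) * card (?B (n - a)))"
    using assms by (subst card_UN_disjoint) (auto simp: finite_fibres_def card_cartesian_product)
  then show "(gf2_series f I * gf2_series g J) $ n = gf2_series (\<lambda>p. f (fst p) + g (snd p)) (I \<times> J) $ n"
    by (simp add: gf2_series_nth fps_mult_nth eq)
qed

section \<open>Pentagonal and triangular numbers\<close>

definition pentagonal :: "int \<Rightarrow> nat" where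
  "pentagonal j = nat ((3 * j * j - j) div 2)"

definition triangular :: "nat \<Rightarrow> nat" where
  "triangular k = k * (k + 1) div 2"

lemma pentagonal_double: "2 * int (pentagonal j) = 3 * j * j - j"
proof -
  have e: "3 * j * j - j = j * (3 * j - 1)"
    by (simp add: algebra_simps)
  have "even (3 * j * j - j)"
    unfolding e by (cases "even j") auto
  moreover have "0 \<le> 3 * j * j - j"
    unfolding e by (cases "j \<ge> 0") (auto simp: zero_le_mult_iff)
  ultimately show ?thesis
    unfolding pentagonal_def by auto
qed

lemma triangular_double: "2 * int (triangular k) = int k * (int k + 1)"
proof -
  have "even (k * (k + 1))" by auto
  then have "2 * triangular k = k * (k + 1)"
    unfolding triangular_def by auto
  then show ?thesis
    by (metis of_nat_mult of_nat_numeral of_nat_add of_nat_1)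
qed

lemma triangular_Suc: "triangular (Suc k) = triangular k + Suc k"
  using triangular_double[of k] triangular_double[of "Suc k"] by (simp add: algebra_simps)

lemma le_triangular: "k \<le> triangular k"
proof -
  have "2 * int k \<le> int k * (int k + 1)"
    by (cases k) (auto simp: algebra_simps)
  then show ?thesis
    using triangular_double[of k] by linarith
qed

lemma abs_le_pentagonal: "nat \<bar>j\<bar> \<le> pentagonal j"
proof -
  have "\<bar>j\<bar> * 1 \<le> \<bar>j\<bar> * \<bar>j\<bar>" if "j \<noteq> 0"
    using that by (intro mult_left_mono) auto
  then have "\<bar>j\<bar> \<le> j * j"
    by (cases "j = 0") simp_all
  then show ?thesis
    using pentagonal_double[of j] by linarith
qed

lemma finite_fibres_pentagonal: "finite_fibres pentagonal UNIV"
  unfolding finite_fibres_def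
proof
  fix n
  have "{j\<in>UNIV. pentagonal j = n} \<subseteq> {-int n..int n}"
  proof
    fix j assume "j \<in> {j\<in>UNIV. pentagonal j = n}"
    then have "nat \<bar>j\<bar> \<le> n"
      using abs_le_pentagonal[of j] by simp
    then show "j \<in> {-int n..int n}" by auto
  qed
  then show "finite {j\<in>UNIV. pentagonal j = n}"
    by (rule finite_subset) simp
qed

lemma finite_fibres_triangular: "finite_fibres triangular UNIV"
  unfolding finite_fibres_def
proof
  fix n
  have "{k\<in>UNIV. triangular k = n} \<subseteq> {0..n}"
    using le_triangular by fastforce
  then show "finite {k\<in>UNIV. triangular k = n}"
    by (rule finite_subset) simp
qed

section \<open>Euler's pentagonal number theorem modulo 2\<close>

text \<open>Shanks' finite form of Euler's pentagonal theorem.\<close>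

definition shanks_sum :: "nat \<Rightarrow> bit fps" where
  "shanks_sum n = (\<Sum>k\<in>{0..n}. fps_X ^ (n * k + triangular k) * (\<Prod>j\<in>{Suc k..n}. (1 + fps_X ^ j)))"

lemma bit_fps_telescope: "(\<Sum>k\<in>{0..n}. (A k + A (Suc k) :: bit fps)) = A 0 + A (Suc n)"
proof (induction n)
  case (Suc n)
  have "(\<Sum>k\<in>{0..Suc n}. A k + A (Suc k)) = A 0 + (A (Suc n) + A (Suc n)) + A (Suc (Suc n))"
    using Suc by (simp add: add.assoc)
  then show ?case by simp
qed simp

lemma shanks_sum_Suc:
  "shanks_sum (Suc n) = shanks_sum n + fps_X ^ (n * Suc n + triangular (Suc n))
     + fps_X ^ (Suc n * Suc n + triangular (Suc n))"
proof -
  define N where "N = Suc n"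
  define P where "P = (\<lambda>k m. (\<Prod>j\<in>{Suc k..m}. (1 + fps_X ^ j)) :: bit fps)"
  define A where "A = (\<lambda>k. fps_X ^ (n * k + triangular k) * (\<Prod>j\<in>{k..n}. (1 + fps_X ^ j)) :: bit fps)"
  define L where "L = (\<Sum>k\<in>{0..n}. fps_X ^ (N * k + triangular k) * P k N)"
  have split: "shanks_sum N = L + fps_X ^ (N * N + triangular N)"
    unfolding shanks_sum_def L_def P_def N_def by (simp add: sum.atLeast0_atMost_Suc)
  have pair: "fps_X ^ (N * k + triangular k) * P k N + fps_X ^ (n * k + triangular k) * P k n
      = A k + A (Suc k)" if "k \<le> n" for k
  proof -
    have "P k N = P k n * (1 + fps_X ^ N)"
      unfolding P_def N_def using that by simp
    moreover have "A k = fps_X ^ (n * k + triangular k) * ((1 + fps_X ^ k) * P k n)"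
      unfolding A_def P_def using that by (simp add: prod.atLeast_Suc_atMost)
    moreover have "A (Suc k) = fps_X ^ (n * k + triangular k) * fps_X ^ k * fps_X ^ N * P k n"
      unfolding A_def P_def N_def by (simp add: triangular_Suc power_add mult.assoc add_ac)
    ultimately show ?thesis
      unfolding N_def by (simp add: algebra_simps power_add)
  qed
  have "L + shanks_sum n = (\<Sum>k\<in>{0..n}. fps_X ^ (N * k + triangular k) * P k N
      + fps_X ^ (n * k + triangular k) * P k n)"
    unfolding L_def shanks_sum_def P_def by (simp add: sum.distrib)
  also have "\<dots> = (\<Sum>k\<in>{0..n}. A k + A (Suc k))"
    by (intro sum.cong) (simp_all add: pair)
  also have "\<dots> = A 0 + A (Suc n)"
    by (rule bit_fps_telescope)
  also have "A 0 = 0" \<comment> \<open>it contains the factor 1 + q^0 = 2 = 0\<close>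
    unfolding A_def by (rule mult_eq_0_iff[THEN iffD2], rule disjI2, rule prod_zero)
      (auto intro: bexI[of _ 0] simp: one_add_one[symmetric])
  finally have "L + shanks_sum n = fps_X ^ (n * Suc n + triangular (Suc n))"
    unfolding A_def by simp
  then have "L = shanks_sum n + fps_X ^ (n * Suc n + triangular (Suc n))"
    by (metis add.assoc bit_fps_add_self add.right_neutral add.commute)
  then show ?thesis
    using split unfolding N_def by simp
qed

lemma pentagonal_of_nat: "pentagonal (int (Suc n)) = n * Suc n + triangular (Suc n)"
proof -
  have "int (pentagonal (int (Suc n))) = int (n * Suc n + triangular (Suc n))"
    using pentagonal_double[of "int (Suc n)"] triangular_double[of "Suc n"]
    by (simp add: algebra_simps)
  then show ?thesis by (simp only: of_nat_eq_iff)
qed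

lemma pentagonal_uminus_of_nat: "pentagonal (- int (Suc n)) = Suc n * Suc n + triangular (Suc n)"
proof -
  have "int (pentagonal (- int (Suc n))) = int (Suc n * Suc n + triangular (Suc n))"
    using pentagonal_double[of "- int (Suc n)"] triangular_double[of "Suc n"]
    by (simp add: algebra_simps)
  then show ?thesis by (simp only: of_nat_eq_iff)
qed

lemma shanks_sum_eq_gf2_series: "shanks_sum n = gf2_series pentagonal {-int n..int n}"
proof (induction n)
  case 0
  then show ?case
    by (simp add: shanks_sum_def gf2_series_singleton triangular_def pentagonal_def)
next
  case (Suc n)
  let ?I = "{-int n..int n}"
  have "{-int (Suc n)..int (Suc n)} = (?I \<union> {int (Suc n)}) \<union> {- int (Suc n)}"
    by auto
  then have "gf2_series pentagonal {-int (Suc n)..int (Suc n)}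
      = gf2_series pentagonal (?I \<union> {int (Suc n)}) + gf2_series pentagonal {- int (Suc n)}"
    by (simp only:) (rule gf2_series_Un; auto intro: finite_fibres_finite)
  also have "gf2_series pentagonal (?I \<union> {int (Suc n)})
      = gf2_series pentagonal ?I + gf2_series pentagonal {int (Suc n)}"
    by (rule gf2_series_Un) (auto intro: finite_fibres_finite)
  finally have "gf2_series pentagonal {-int (Suc n)..int (Suc n)}
      = gf2_series pentagonal ?I + gf2_series pentagonal {int (Suc n)}
        + gf2_series pentagonal {- int (Suc n)}" .
  then show ?case
    by (simp only: Suc.IH shanks_sum_Suc gf2_series_singleton pentagonal_of_nat
        pentagonal_uminus_of_nat)
qed

theorem euler_pentagonal_mod2: "(qpoch_fps 1 :: bit fps) = gf2_series pentagonal UNIV"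
proof (rule fps_ext)
  fix m
  have "qpoch_fps 1 $ m = (\<Prod>j\<in>{1..m}. (1 + fps_X ^ j) :: bit fps) $ m"
    by (simp add: qpoch_fps_def bit_fps_diff)
  also have "\<dots> = shanks_sum m $ m"
  proof -
    have "(fps_X ^ (m * k + triangular k) * (\<Prod>j\<in>{Suc k..m}. (1 + fps_X ^ j)) :: bit fps) $ m = 0"
      if "k \<in> {Suc 0..m}" for k
      using that le_triangular[of k] by (cases k) (auto simp: fps_X_power_mult_nth)
    then show ?thesis
      by (simp add: shanks_sum_def fps_sum_nth sum.atLeast_Suc_atMost triangular_def)
  qed
  also have "\<dots> = gf2_series pentagonal UNIV $ m"
  proof -
    have "{j\<in>{-int m..int m}. pentagonal j = m} = {j\<in>UNIV. pentagonal j = m}"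
    proof (intro set_eqI iffI)
      fix j assume "j \<in> {j\<in>UNIV. pentagonal j = m}"
      then have "nat \<bar>j\<bar> \<le> m"
        using abs_le_pentagonal[of j] by simp
      with \<open>j \<in> {j\<in>UNIV. pentagonal j = m}\<close> show "j \<in> {j\<in>{-int m..int m}. pentagonal j = m}"
        by auto
    qed auto
    then show ?thesis
      by (simp add: shanks_sum_eq_gf2_series gf2_series_nth)
  qed
  finally show "qpoch_fps 1 $ m = gf2_series pentagonal UNIV $ m" .
qed

section \<open>Gauss's identity modulo 2\<close>

lemma involution_on_Diff_orbit:
  assumes "\<forall>x\<in>S. \<iota> x \<in> S \<and> \<iota> (\<iota> x) = x" "x \<in> S"
  shows "\<forall>y\<in>S - {x, \<iota> x}. \<iota> y \<in> S - {x, \<iota> x} \<and> \<iota> (\<iota> y) = y"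
proof
  fix y assume "y \<in> S - {x, \<iota> x}"
  then have "y \<in> S" "y \<noteq> x" "y \<noteq> \<iota> x" "\<iota> (\<iota> x) = x" "\<iota> y \<in> S" "\<iota> (\<iota> y) = y"
    using assms by auto
  then show "\<iota> y \<in> S - {x, \<iota> x} \<and> \<iota> (\<iota> y) = y"
    by (metis DiffI insertE empty_iff)
qed

lemma card_parity_eq_fixed_points:
  assumes "finite S" "\<forall>x\<in>S. \<iota> x \<in> S \<and> \<iota> (\<iota> x) = x"
  shows "(of_nat (card S) :: bit) = of_nat (card {x\<in>S. \<iota> x = x})"
  using assms
proof (induction "card S" arbitrary: S rule: less_induct)
  case less
  show ?case
  proof (cases "\<exists>x\<in>S. \<iota> x \<noteq> x")
    case False
    then have "{x\<in>S. \<iota> x = x} = S" by auto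
    then show ?thesis by simp
  next
    case True
    then obtain x where x: "x \<in> S" "\<iota> x \<noteq> x" by auto
    define S' where "S' = S - {x, \<iota> x}"
    have sub: "{x, \<iota> x} \<subseteq> S"
      using less.prems x by auto
    have "card {x, \<iota> x} = 2"
      using x by simp
    then have card: "card S = card S' + 2"
      using card_Diff_subset[OF _ sub] card_mono[OF less.prems(1) sub] unfolding S'_def by simp
    moreover have "{y\<in>S'. \<iota> y = y} = {y\<in>S. \<iota> y = y}"
      using less.prems x unfolding S'_def by auto
    ultimately have "(of_nat (card S') :: bit) = of_nat (card {y\<in>S. \<iota> y = y})"
      using less.hyps[of S'] less.prems involution_on_Diff_orbit[OF less.prems(2) x(1)]
      unfolding S'_def by simp
    then show ?thesis
      using card by simp
  qed
qed

definition odd_reps :: "int \<Rightarrow> (int \<times> int) set" where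
  "odd_reps N = {(a, b). 0 < a \<and> 0 < b \<and> odd a \<and> odd b \<and> 3 * a * a + b * b = N}"

text \<open>Multiplication of b + a\<surd>-3 by the unit (1 \<plusminus> \<surd>-3)/2, with the sign chosen so that both
  new coordinates are odd, followed by taking absolute values.\<close>

definition eisenstein_twist :: "int \<times> int \<Rightarrow> int \<times> int" where
  "eisenstein_twist p = (let a = fst p; b = snd p in
     if (a + b) mod 4 = 2 then ((a + b) div 2, \<bar>3 * a - b\<bar> div 2)
     else (\<bar>a - b\<bar> div 2, (3 * a + b) div 2))"

lemma eisenstein_twist_eq_plus:
  assumes "(x + y) mod 4 = 2" "x + y = 2 * p" "3 * x - y = 2 * q"
  shows "eisenstein_twist (x, y) = (p, \<bar>q\<bar>)"
  using assms by (simp add: eisenstein_twist_def Let_def abs_mult)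

lemma eisenstein_twist_eq_minus:
  assumes "(x + y) mod 4 \<noteq> 2" "x - y = 2 * p" "3 * x + y = 2 * q"
  shows "eisenstein_twist (x, y) = (\<bar>p\<bar>, q)"
  using assms by (simp add: eisenstein_twist_def Let_def abs_mult)

lemma eisenstein_norm_halves:
  fixes a b c d :: int
  assumes "a + b = 2 * c" "3 * a - b = 2 * d"
  shows "3 * c * c + d * d = 3 * a * a + b * b"
proof -
  have "4 * (3 * c * c + d * d) = 3 * (a + b) * (a + b) + (3 * a - b) * (3 * a - b)"
    unfolding assms by (simp add: algebra_simps)
  then show ?thesis
    by (simp add: algebra_simps)
qed

lemma odd_reps_snd_ne: "(a, b) \<in> odd_reps N \<Longrightarrow> \<not> 3 dvd N \<Longrightarrow> b \<noteq> 3 * a"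
  unfolding odd_reps_def by auto

lemma eisenstein_twist_plus:
  assumes ab: "(a, b) \<in> odd_reps N" and N: "\<not> 3 dvd N" and mod4: "(a + b) mod 4 = 2"
  shows "eisenstein_twist (a, b) \<in> odd_reps N \<and> eisenstein_twist (eisenstein_twist (a, b)) = (a, b)
    \<and> (eisenstein_twist (a, b) = (a, b) \<longleftrightarrow> a = b)"
proof -
  from ab have a: "a > 0" "b > 0" "odd a" "odd b" and norm: "3 * a * a + b * b = N"
    by (auto simp: odd_reps_def)
  have "even (a + b)" "even (3 * a - b)"
    using a(3,4) by simp_all
  then obtain c d where c: "a + b = 2 * c" and d: "3 * a - b = 2 * d"
    by (meson evenE)
  have twist: "eisenstein_twist (a, b) = (c, \<bar>d\<bar>)"
    by (rule eisenstein_twist_eq_plus[OF mod4 c d])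
  have cd: "c + d = 2 * a" "3 * c - d = 2 * b"
    using c d by linarith+
  have "odd c"
    using mod4 c by presburger
  moreover have "odd d"
    using \<open>odd c\<close> cd(1) by presburger
  moreover have "c > 0" "d \<noteq> 0"
    using a c d odd_reps_snd_ne[OF ab N] by linarith+
  moreover have "3 * c * c + \<bar>d\<bar> * \<bar>d\<bar> = N"
    using eisenstein_norm_halves[OF c d] norm by simp
  ultimately have "(c, \<bar>d\<bar>) \<in> odd_reps N"
    by (simp add: odd_reps_def)
  moreover have "eisenstein_twist (c, \<bar>d\<bar>) = (a, b)"
  proof (cases "d > 0")
    case True
    have "c + \<bar>d\<bar> = 2 * a"
      using True cd(1) by simp
    then have "(c + \<bar>d\<bar>) mod 4 = 2"
      using a(3) by presburger
    then show ?thesis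
      using eisenstein_twist_eq_plus[of c "\<bar>d\<bar>" a b] True cd a by simp
  next
    case False
    have "c - d = b - a"
      using c d by linarith
    then have "(c + \<bar>d\<bar>) mod 4 \<noteq> 2"
      using False mod4 a(3) by presburger
    then show ?thesis
      using eisenstein_twist_eq_minus[of c "\<bar>d\<bar>" a b] False cd a by simp
  qed
  moreover have "(c, \<bar>d\<bar>) = (a, b) \<longleftrightarrow> a = b"
    using c d a(1) by auto
  ultimately show ?thesis
    using twist by auto
qed

lemma eisenstein_twist_minus:
  assumes ab: "(a, b) \<in> odd_reps N" and N: "\<not> 3 dvd N" and mod4: "(a + b) mod 4 \<noteq> 2"
  shows "eisenstein_twist (a, b) \<in> odd_reps N \<and> eisenstein_twist (eisenstein_twist (a, b)) = (a, b)
    \<and> eisenstein_twist (a, b) \<noteq> (a, b) \<and> a \<noteq> b"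
proof -
  from ab have a: "a > 0" "b > 0" "odd a" "odd b" and norm: "3 * a * a + b * b = N"
    by (auto simp: odd_reps_def)
  have "(a + b) mod 4 = 0"
    using a(3,4) mod4 by presburger
  have "even (a - b)" "even (3 * a + b)"
    using a(3,4) by simp_all
  then obtain u v where u: "a - b = 2 * u" and v: "3 * a + b = 2 * v"
    by (meson evenE)
  have twist: "eisenstein_twist (a, b) = (\<bar>u\<bar>, v)"
    by (rule eisenstein_twist_eq_minus[OF mod4 u v])
  have uv: "u + v = 2 * a" "3 * u - v = 2 * (- b)" "v - u = a + b"
    using u v by linarith+
  have "odd u"
    using \<open>(a + b) mod 4 = 0\<close> a(4) u by presburger
  moreover have "odd v"
    using \<open>odd u\<close> uv(1) by presburger
  moreover have "v > 0"
    using a v by linarith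
  moreover have "3 * \<bar>u\<bar> * \<bar>u\<bar> + v * v = N"
    using eisenstein_norm_halves[of a "- b" u v] u v norm by simp
  ultimately have "(\<bar>u\<bar>, v) \<in> odd_reps N"
    by (auto simp: odd_reps_def)
  moreover have "eisenstein_twist (\<bar>u\<bar>, v) = (a, b)"
  proof (cases "u > 0")
    case True
    have "(\<bar>u\<bar> + v) mod 4 = 2"
      using True uv(1) a(3) by presburger
    then show ?thesis
      using eisenstein_twist_eq_plus[of "\<bar>u\<bar>" v a "- b"] True uv a by simp
  next
    case False
    have "(\<bar>u\<bar> + v) mod 4 \<noteq> 2"
      using False uv(3) \<open>(a + b) mod 4 = 0\<close> by simp
    then show ?thesis
      using eisenstein_twist_eq_minus[of "\<bar>u\<bar>" v "- a" b] False uv a by simp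
  qed
  moreover have "v \<noteq> b"
    using odd_reps_snd_ne[OF ab N] v by linarith
  moreover have "a \<noteq> b"
    using \<open>odd u\<close> u by auto
  ultimately show ?thesis
    using twist by auto
qed

lemma eisenstein_twist_involution:
  assumes "x \<in> odd_reps N" "\<not> 3 dvd N"
  shows "eisenstein_twist x \<in> odd_reps N \<and> eisenstein_twist (eisenstein_twist x) = x
    \<and> (eisenstein_twist x = x \<longleftrightarrow> fst x = snd x)"
  using assms eisenstein_twist_plus[of "fst x" "snd x" N] eisenstein_twist_minus[of "fst x" "snd x" N]
  by (cases "(fst x + snd x) mod 4 = 2") auto

definition pent_root :: "int \<Rightarrow> int" where
  "pent_root j = \<bar>6 * j - 1\<bar>"

lemma pent_root_square: "pent_root j * pent_root j = 24 * int (pentagonal j) + 1"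
  using pentagonal_double[of j] by (simp add: pent_root_def algebra_simps)

lemma pent_root_inj: "pent_root j = pent_root j' \<Longrightarrow> j = j'"
  unfolding pent_root_def abs_eq_iff by presburger

lemma pent_root_pos: "pent_root j > 0"
  unfolding pent_root_def by presburger

lemma pent_root_odd: "odd (pent_root j)"
  unfolding pent_root_def by presburger

lemma pent_root_surj:
  assumes "b > 0" "odd b" "\<not> 3 dvd b"
  shows "\<exists>j. pent_root j = b"
proof (cases "b mod 6 = 5")
  case True
  then have "6 * ((b + 1) div 6) - 1 = b"
    by presburger
  then have "pent_root ((b + 1) div 6) = b"
    using assms(1) by (simp add: pent_root_def)
  then show ?thesis ..
next
  case False
  then have "b mod 6 = 1"
    using assms(2,3) by presburger
  then have "6 * ((1 - b) div 6) - 1 = - b"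
    by presburger
  then have "pent_root ((1 - b) div 6) = b"
    using assms(1) by (simp add: pent_root_def)
  then show ?thesis ..
qed

lemma odd_square_eq_triangular: "(2 * int k + 1) * (2 * int k + 1) = 8 * int (triangular k) + 1"
  using triangular_double[of k] by (simp add: algebra_simps)

lemma norm_odd_pent_root:
  "3 * (2 * int k + 1) * (2 * int k + 1) + pent_root j * pent_root j
     = 24 * (int (pentagonal j) + int (triangular k)) + 4"
  using odd_square_eq_triangular[of k] pent_root_square[of j] by (simp add: algebra_simps)

lemma finite_odd_reps: "finite (odd_reps N)"
proof (rule finite_subset)
  show "odd_reps N \<subseteq> {0..N} \<times> {0..N}"
  proof
    fix x assume "x \<in> odd_reps N"
    then obtain a b where x: "x = (a, b)" "a > 0" "b > 0" "3 * a * a + b * b = N"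
      by (auto simp: odd_reps_def)
    have "a \<le> a * a" "b \<le> b * b" "0 \<le> a * a" "0 \<le> b * b"
      using x by (simp_all add: mult_le_cancel_left1)
    then have "a \<le> N" "b \<le> N"
      using x by linarith+
    then show "x \<in> {0..N} \<times> {0..N}"
      using x by auto
  qed
qed simp

lemma odd_reps_24_not_3_dvd:
  assumes "3 * a * a + b * b = 24 * int n + 4"
  shows "\<not> 3 dvd (b :: int)"
proof
  assume "3 dvd b"
  then obtain t where "b = 3 * t" ..
  then have "3 dvd 24 * int n + 4"
    using assms by (metis dvd_add dvd_mult_left dvd_refl)
  then show False
    by presburger
qed

lemma card_pentagonal_triangular_eq:
  "card {p :: int \<times> nat. pentagonal (fst p) + triangular (snd p) = n}
     = card (odd_reps (24 * int n + 4))"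
proof (rule bij_betw_same_card)
  let ?F = "{p :: int \<times> nat. pentagonal (fst p) + triangular (snd p) = n}"
  define \<phi> where "\<phi> = (\<lambda>p::int \<times> nat. (2 * int (snd p) + 1, pent_root (fst p)))"
  have "inj_on \<phi> ?F"
    by (rule inj_onI) (auto simp: \<phi>_def prod_eq_iff dest: pent_root_inj)
  moreover have "\<phi> ` ?F = odd_reps (24 * int n + 4)"
  proof (intro set_eqI iffI)
    fix x assume "x \<in> \<phi> ` ?F"
    then obtain j k where jk: "x = (2 * int k + 1, pent_root j)" "pentagonal j + triangular k = n"
      by (auto simp: \<phi>_def)
    then show "x \<in> odd_reps (24 * int n + 4)"
      using norm_odd_pent_root[of k j] pent_root_pos pent_root_odd
      by (auto simp: odd_reps_def simp flip: of_nat_add)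
  next
    fix x assume "x \<in> odd_reps (24 * int n + 4)"
    then obtain a b where x: "x = (a, b)" "a > 0" "b > 0" "odd a" "odd b"
        and norm: "3 * a * a + b * b = 24 * int n + 4"
      by (auto simp: odd_reps_def)
    define k where "k = nat ((a - 1) div 2)"
    have "int k = (a - 1) div 2"
      unfolding k_def using x by simp
    then have ka: "2 * int k + 1 = a"
      using x by presburger
    obtain j where jb: "pent_root j = b"
      using pent_root_surj x odd_reps_24_not_3_dvd[OF norm] by blast
    have "24 * (int (pentagonal j) + int (triangular k)) + 4 = 24 * int n + 4"
      using norm_odd_pent_root[of k j] norm unfolding ka jb by simp
    then have "(j, k) \<in> ?F"
      by (simp flip: of_nat_add)
    moreover have "\<phi> (j, k) = x"
      using ka jb x by (simp add: \<phi>_def)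
    ultimately show "x \<in> \<phi> ` ?F"
      by blast
  qed
  ultimately show "bij_betw \<phi> ?F (odd_reps (24 * int n + 4))"
    by (simp add: bij_betw_def)
qed

lemma card_pentagonal_times_4_eq:
  "card {j :: int. 4 * pentagonal j = n}
     = card {x\<in>odd_reps (24 * int n + 4). eisenstein_twist x = x}"
proof (rule bij_betw_same_card)
  let ?G = "{j :: int. 4 * pentagonal j = n}"
  let ?N = "24 * int n + 4"
  have N: "\<not> 3 dvd ?N" by presburger
  define \<phi> where "\<phi> = (\<lambda>j::int. (pent_root j, pent_root j))"
  have "inj_on \<phi> ?G"
    by (rule inj_onI) (auto simp: \<phi>_def dest: pent_root_inj)
  moreover have "\<phi> ` ?G = {x\<in>odd_reps ?N. eisenstein_twist x = x}"
  proof (intro set_eqI iffI)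
    fix x assume "x \<in> \<phi> ` ?G"
    then obtain j where j: "x = (pent_root j, pent_root j)" "4 * pentagonal j = n"
      by (auto simp: \<phi>_def)
    have "3 * pent_root j * pent_root j + pent_root j * pent_root j = ?N"
      using pent_root_square[of j] j(2) by (simp add: algebra_simps flip: of_nat_mult)
    then have "x \<in> odd_reps ?N"
      using j pent_root_pos pent_root_odd by (simp add: odd_reps_def)
    then show "x \<in> {x\<in>odd_reps ?N. eisenstein_twist x = x}"
      using eisenstein_twist_involution[OF _ N] j by auto
  next
    fix x assume x: "x \<in> {x\<in>odd_reps ?N. eisenstein_twist x = x}"
    then obtain a where xa: "x = (a, a)" "a > 0" "odd a" and norm: "3 * a * a + a * a = ?N"
      using eisenstein_twist_involution[of x ?N, OF _ N] by (auto simp: odd_reps_def)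
    obtain j where ja: "pent_root j = a"
      using pent_root_surj xa odd_reps_24_not_3_dvd[OF norm] by blast
    have "4 * (24 * int (pentagonal j) + 1) = ?N"
      using norm pent_root_square[of j] ja by (simp add: algebra_simps)
    then have "4 * pentagonal j = n"
      by presburger
    then show "x \<in> \<phi> ` ?G"
      using ja xa by (auto simp: \<phi>_def)
  qed
  ultimately show "bij_betw \<phi> ?G {x\<in>odd_reps ?N. eisenstein_twist x = x}"
    by (simp add: bij_betw_def)
qed

theorem gauss_identity_mod2:
  "(qpoch_fps 1 :: bit fps) * gf2_series triangular UNIV = fps_dilate 4 (qpoch_fps 1)"
proof (rule fps_ext)
  fix n
  let ?N = "24 * int n + 4"
  have N: "\<not> 3 dvd ?N" by presburger
  have "qpoch_fps 1 * gf2_series triangular UNIV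
      = gf2_series (\<lambda>p. pentagonal (fst p) + triangular (snd p)) (UNIV \<times> UNIV)"
    unfolding euler_pentagonal_mod2
    by (rule gf2_series_mult[OF finite_fibres_pentagonal finite_fibres_triangular])
  moreover have "fps_dilate 4 (qpoch_fps 1) = gf2_series (\<lambda>j. 4 * pentagonal j) UNIV"
    unfolding euler_pentagonal_mod2 by (simp add: fps_dilate_gf2_series)
  moreover have "(of_nat (card (odd_reps ?N)) :: bit)
      = of_nat (card {x\<in>odd_reps ?N. eisenstein_twist x = x})"
    using eisenstein_twist_involution[OF _ N]
    by (intro card_parity_eq_fixed_points[OF finite_odd_reps]) blast
  ultimately show "(qpoch_fps 1 * gf2_series triangular UNIV) $ n = fps_dilate 4 (qpoch_fps 1) $ n"
    by (simp add: gf2_series_nth card_pentagonal_triangular_eq card_pentagonal_times_4_eq)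
qed

theorem gf2_series_triangular_eq_qpoch_cube:
  "gf2_series triangular UNIV = (qpoch_fps 1 :: bit fps) ^ 3"
proof -
  have "qpoch_fps 1 * gf2_series triangular UNIV = (qpoch_fps 4 :: bit fps)"
    using gauss_identity_mod2 fps_dilate_qpoch_fps[of 4 1] by simp
  also have "\<dots> = qpoch_fps 1 * qpoch_fps 1 ^ 3"
    by (simp add: qpoch_fps_even_mod2 power_Suc [symmetric] del: power_Suc)
  finally show ?thesis
    using qpoch_fps_nonzero[of 1, where 'a=bit] by simp
qed

section \<open>Cube identities for \<open>(q;q)\<close> modulo 2\<close>

definition triangular_index :: "int \<Rightarrow> nat" where
  "triangular_index j = (if j \<le> 0 then nat (- 3 * j) else nat (3 * j - 1))"

lemma triangular_triangular_index: "triangular (triangular_index j) = 3 * pentagonal j"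
proof -
  have "int (triangular_index j) * (int (triangular_index j) + 1) = 3 * (3 * j * j - j)"
    by (simp add: triangular_index_def algebra_simps)
  then have "2 * int (triangular (triangular_index j)) = 2 * int (3 * pentagonal j)"
    using triangular_double pentagonal_double[of j] by simp
  then show ?thesis
    by simp
qed

lemma bij_betw_triangular_index: "bij_betw triangular_index UNIV {k. k mod 3 \<noteq> 1}"
proof (rule bij_betw_byWitness[where f' = "\<lambda>k. if k mod 3 = 0 then - (int k div 3) else (int k + 1) div 3"])
  have index: "int (triangular_index j) = (if j \<le> 0 then - 3 * j else 3 * j - 1)" for j
    by (simp add: triangular_index_def)
  have mod3: "triangular_index j mod 3 = (if j \<le> 0 then 0 else 2)" for j
  proof (cases "j \<le> 0")
    case True
    then have "int (triangular_index j) = - 3 * j"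
      using index[of j] by simp
    then show ?thesis
      using True by presburger
  next
    case False
    then have "int (triangular_index j) = 3 * j - 1"
      using index[of j] by simp
    then show ?thesis
      using False by presburger
  qed
  show "\<forall>j\<in>UNIV. (if triangular_index j mod 3 = 0 then - (int (triangular_index j) div 3)
      else (int (triangular_index j) + 1) div 3) = j"
    using index mod3 by simp presburger
  show "triangular_index ` UNIV \<subseteq> {k. k mod 3 \<noteq> 1}"
    using mod3 by (auto split: if_splits)
  show "\<forall>k\<in>{k. k mod 3 \<noteq> 1}. triangular_index (if k mod 3 = 0 then - (int k div 3)
      else (int k + 1) div 3) = k"
  proof
    fix k :: nat assume "k \<in> {k. k mod 3 \<noteq> 1}"
    then have k: "k mod 3 \<noteq> 1" by simp
    show "triangular_index (if k mod 3 = 0 then - (int k div 3) else (int k + 1) div 3) = k"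
    proof (cases "k mod 3 = 0")
      case True
      then have "int k = 3 * (int k div 3)" by presburger
      then show ?thesis using True by (simp add: triangular_index_def)
    next
      case False
      then have "int k = 3 * ((int k + 1) div 3) - 1" "(int k + 1) div 3 > 0"
        using k by presburger+
      then show ?thesis using False by (simp add: triangular_index_def)
    qed
  qed
qed simp

lemma triangular_3_mult_Suc: "triangular (3 * m + 1) = 9 * triangular m + 1"
  using triangular_double[of m] triangular_double[of "3 * m + 1"] by (simp add: algebra_simps)

lemma gf2_series_triangular_dissection:
  "gf2_series triangular UNIV = fps_dilate 3 (qpoch_fps 1) + fps_X * fps_dilate 9 (gf2_series triangular UNIV)"
proof -
  have "gf2_series triangular UNIV
      = gf2_series triangular {k. k mod 3 \<noteq> 1} + gf2_series triangular {k. k mod 3 = 1}"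
  proof -
    have "(UNIV :: nat set) = {k. k mod 3 \<noteq> 1} \<union> {k. k mod 3 = 1}"
      by auto
    then show ?thesis
      by (metis gf2_series_Un finite_fibres_subset[OF finite_fibres_triangular] subset_UNIV
          disjoint_iff mem_Collect_eq)
  qed
  also have "gf2_series triangular {k. k mod 3 \<noteq> 1} = gf2_series (\<lambda>j. 3 * pentagonal j) UNIV"
    using gf2_series_reindex[OF bij_betw_triangular_index, of triangular]
    by (simp add: triangular_triangular_index)
  also have "\<dots> = fps_dilate 3 (qpoch_fps 1)"
    unfolding euler_pentagonal_mod2 by (simp add: fps_dilate_gf2_series)
  also have "gf2_series triangular {k. k mod 3 = 1} = gf2_series (\<lambda>m. triangular (3 * m + 1)) UNIV"
    by (rule gf2_series_reindex [symmetric], rule bij_betw_byWitness[where f' = "\<lambda>k. k div 3"])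
      (auto, presburger)
  also have "\<dots> = gf2_series (\<lambda>m. 9 * triangular m + 1) UNIV"
    by (simp only: triangular_3_mult_Suc)
  also have "\<dots> = fps_X * fps_dilate 9 (gf2_series triangular UNIV)"
    using gf2_series_shift[of 1 "\<lambda>m. 9 * triangular m" UNIV] by (simp add: fps_dilate_gf2_series)
  finally show ?thesis .
qed

lemma qpoch_fps_1_cube_dissection:
  "(qpoch_fps 1 :: bit fps) ^ 3 = qpoch_fps 3 + fps_X * qpoch_fps 9 ^ 3"
  using gf2_series_triangular_dissection
  by (simp add: gf2_series_triangular_eq_qpoch_cube fps_dilate_power fps_dilate_qpoch_fps)

lemma eq_0_if_eq_X_mult_dilate_3:
  assumes "(f :: bit fps) = fps_X * fps_dilate 3 f"
  shows "f = 0"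
proof (rule fps_ext)
  fix n
  show "f $ n = 0 $ n"
  proof (induction n rule: less_induct)
    case (less n)
    have "f $ n = (fps_X * fps_dilate 3 f) $ n"
      using assms by simp
    then show ?case
      using less[of "(n - 1) div 3"] by (cases n) (auto simp: fps_dilate_nth)
  qed
qed

text \<open>By the cube dissection the difference D of the two sides satisfies D = q D(q^3),
  so it vanishes.\<close>

theorem qpoch_fps_1_3_cube:
  "(qpoch_fps 1 * qpoch_fps 3) ^ 3 = (qpoch_fps 1 :: bit fps) ^ 12 + fps_X * qpoch_fps 3 ^ 12"
proof -
  define a where "a = (qpoch_fps 1 :: bit fps)"
  define c where "c = (qpoch_fps 3 :: bit fps)"
  define v where "v = (qpoch_fps 9 :: bit fps)"
  define D where "D = (a * c) ^ 3 + a ^ 12 + fps_X * c ^ 12"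
  have cube: "a ^ 3 = c + fps_X * v ^ 3"
    unfolding a_def c_def v_def by (rule qpoch_fps_1_cube_dissection)
  have "fps_dilate 3 D = (c * v) ^ 3 + c ^ 12 + fps_X ^ 3 * v ^ 12"
    unfolding D_def a_def c_def v_def
    by (simp add: fps_dilate_add fps_dilate_mult fps_dilate_power fps_dilate_X fps_dilate_qpoch_fps)
  then have "D - fps_X * fps_dilate 3 D = (c + fps_X * v ^ 3) * c ^ 3 + (c + fps_X * v ^ 3) ^ 4
      + fps_X * c ^ 12 - fps_X * ((c * v) ^ 3 + c ^ 12 + fps_X ^ 3 * v ^ 12)"
    unfolding D_def power_mult_distrib cube [symmetric] by (simp flip: power_mult)
  also have "\<dots> = 2 * (c ^ 4 + 2 * c ^ 3 * fps_X * v ^ 3 + 3 * c ^ 2 * fps_X ^ 2 * v ^ 6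
      + 2 * c * fps_X ^ 3 * v ^ 9)"
    by algebra
  finally have "D = fps_X * fps_dilate 3 D"
    by simp
  then have "D = 0"
    by (rule eq_0_if_eq_X_mult_dilate_3)
  then have "(a * c) ^ 3 + (a ^ 12 + fps_X * c ^ 12) = 0"
    by (simp add: D_def add.assoc)
  then show ?thesis
    unfolding a_def c_def bit_fps_add_eq_0_iff .
qed

section \<open>The Hauptmoduln modulo 2\<close>

definition cube_ratio_1_3 :: "bit fps" where
  "cube_ratio_1_3 = qpoch_fps 1 ^ 3 * inverse (qpoch_fps 3) ^ 3"

definition cube_ratio_3_1 :: "bit fps" where
  "cube_ratio_3_1 = qpoch_fps 3 ^ 3 * inverse (qpoch_fps 1) ^ 3"

lemma qpoch_fps_mult_inverse: "(qpoch_fps k :: 'a::field fps) * inverse (qpoch_fps k) = 1"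
  by (simp add: inverse_mult_eq_1')

lemma fps_dilate_4_cube_ratios:
  "fps_dilate 4 cube_ratio_1_3 = (qpoch_fps 1 ^ 4) ^ 3 * (inverse (qpoch_fps 3) ^ 4) ^ 3"
  "fps_dilate 4 cube_ratio_3_1 = (qpoch_fps 3 ^ 4) ^ 3 * (inverse (qpoch_fps 1) ^ 4) ^ 3"
  unfolding cube_ratio_1_3_def cube_ratio_3_1_def
  by (simp_all add: fps_dilate_mult fps_dilate_power fps_dilate_inverse_qpoch_fps fps_dilate_qpoch_fps
      qpoch_fps_even_mod2 fps_inverse_power)

lemma j6_quotient_cube_mod2:
  "(qpoch_fps 2 * qpoch_fps 3 ^ 3 * inverse (qpoch_fps 1 * qpoch_fps 6 ^ 3) :: bit fps) ^ 3
     = fps_dilate 4 cube_ratio_1_3 + fps_X"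
proof -
  define a where "a = (qpoch_fps 1 :: bit fps)"
  define c where "c = (qpoch_fps 3 :: bit fps)"
  define ia where "ia = inverse a"
  define ic where "ic = inverse c"
  have aa: "a * ia = 1" and cc: "c * ic = 1"
    unfolding a_def c_def ia_def ic_def by (simp_all add: qpoch_fps_mult_inverse)
  have cube: "(a * c) ^ 3 = a ^ 12 + fps_X * c ^ 12"
    unfolding a_def c_def by (rule qpoch_fps_1_3_cube)
  have "(a ^ 2 * c ^ 3 * (ia * (ic ^ 2) ^ 3)) ^ 3 * c ^ 12 = (a * c) ^ 3 * (a * ia) ^ 3 * (c * ic) ^ 18"
    by algebra
  also have "\<dots> = a ^ 12 + fps_X * c ^ 12"
    by (simp only: aa cc cube power_one mult_1_right)
  also have "\<dots> = ((a ^ 4) ^ 3 * (ic ^ 4) ^ 3 + fps_X) * c ^ 12"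
    using cc by algebra
  finally have "(a ^ 2 * c ^ 3 * (ia * (ic ^ 2) ^ 3)) ^ 3 = (a ^ 4) ^ 3 * (ic ^ 4) ^ 3 + fps_X"
    using qpoch_fps_nonzero[of 3, where 'a=bit] unfolding c_def by simp
  then show ?thesis
    unfolding fps_dilate_4_cube_ratios a_def c_def ia_def ic_def
    by (simp add: qpoch_fps_even_mod2 fps_inverse_mult fps_inverse_power)
qed

lemma j6star_quotient_power_6_mod2:
  "(qpoch_fps 1 * qpoch_fps 3 * inverse (qpoch_fps 2 * qpoch_fps 6) :: bit fps) ^ 6
     = fps_dilate 4 cube_ratio_1_3 + fps_X ^ 2 * fps_dilate 4 cube_ratio_3_1"
proof -
  define a where "a = (qpoch_fps 1 :: bit fps)"
  define c where "c = (qpoch_fps 3 :: bit fps)"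
  define ia where "ia = inverse a"
  define ic where "ic = inverse c"
  have aa: "a * ia = 1" and cc: "c * ic = 1"
    unfolding a_def c_def ia_def ic_def by (simp_all add: qpoch_fps_mult_inverse)
  have cube: "(a * c) ^ 3 = a ^ 12 + fps_X * c ^ 12"
    unfolding a_def c_def by (rule qpoch_fps_1_3_cube)
  have "(a * c * (ia ^ 2 * ic ^ 2)) ^ 6 * (a * c) ^ 12 = ((a * c) ^ 3) ^ 2 * (a * ia) ^ 12 * (c * ic) ^ 12"
    by algebra
  also have "\<dots> = (a ^ 12) ^ 2 + (fps_X * c ^ 12) ^ 2"
    by (simp only: aa cc cube power_one mult_1_right bit_fps_square_add)
  also have "\<dots> = ((a ^ 4) ^ 3 * (ic ^ 4) ^ 3 + fps_X ^ 2 * ((c ^ 4) ^ 3 * (ia ^ 4) ^ 3)) * (a * c) ^ 12"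
    using aa cc by algebra
  finally have "(a * c * (ia ^ 2 * ic ^ 2)) ^ 6
      = (a ^ 4) ^ 3 * (ic ^ 4) ^ 3 + fps_X ^ 2 * ((c ^ 4) ^ 3 * (ia ^ 4) ^ 3)"
    using qpoch_fps_nonzero[of 1, where 'a=bit] qpoch_fps_nonzero[of 3, where 'a=bit]
    unfolding a_def c_def by simp
  then show ?thesis
    unfolding fps_dilate_4_cube_ratios a_def c_def ia_def ic_def
    by (simp add: qpoch_fps_even_mod2 fps_inverse_mult fps_inverse_power)
qed

lemma cube_ratio_1_3_dissection:
  "cube_ratio_1_3 = fps_dilate 6 (inverse (qpoch_fps 1)) + fps_X * fps_dilate 3 cube_ratio_3_1"
proof -
  define c where "c = (qpoch_fps 3 :: bit fps)"
  define v where "v = (qpoch_fps 9 :: bit fps)"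
  define ic where "ic = inverse c"
  have cc: "c * ic = 1"
    unfolding c_def ic_def by (simp add: qpoch_fps_mult_inverse)
  have "qpoch_fps 1 ^ 3 * ic ^ 3 * c ^ 3 = (c + fps_X * v ^ 3) * (c * ic) ^ 3"
    unfolding c_def v_def qpoch_fps_1_cube_dissection [symmetric] by algebra
  also have "\<dots> = (ic ^ 2 + fps_X * (v ^ 3 * ic ^ 3)) * c ^ 3"
    using cc by algebra
  finally have "qpoch_fps 1 ^ 3 * ic ^ 3 = ic ^ 2 + fps_X * (v ^ 3 * ic ^ 3)"
    using qpoch_fps_nonzero[of 3, where 'a=bit] unfolding c_def by simp
  then show ?thesis
    unfolding cube_ratio_1_3_def cube_ratio_3_1_def c_def v_def ic_def
    by (simp add: fps_dilate_mult fps_dilate_power fps_dilate_inverse_qpoch_fps fps_dilate_qpoch_fps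
        qpoch_fps_even_mod2 fps_inverse_power)
qed

lemma int_coeffs_qpoch_fps: "int_coeffs (qpoch_fps k)"
proof -
  have "int_coeffs (\<Prod>j\<in>{1..m}. (1 - fps_X ^ (k * j)))" for m
    by (intro int_coeffs_prod int_coeffs_diff) simp_all
  then show ?thesis
    unfolding int_coeffs_def qpoch_fps_def by simp
qed

lemma mod2_fps_qpoch_fps: "mod2_fps (qpoch_fps k) = qpoch_fps k"
proof (rule fps_ext)
  fix m
  have "mod2_fps (\<Prod>j\<in>{1..m}. (1 - fps_X ^ (k * j))) = (\<Prod>j\<in>{1..m}. (1 - fps_X ^ (k * j)))"
    by (simp add: mod2_fps_prod mod2_fps_diff int_coeffs_diff)
  then have "mod2_fps (\<Prod>j\<in>{1..m}. (1 - fps_X ^ (k * j))) $ m = qpoch_fps k $ m"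
    by (simp add: qpoch_fps_def)
  then show "mod2_fps (qpoch_fps k) $ m = qpoch_fps k $ m"
    by (simp add: mod2_fps_nth qpoch_fps_def)
qed

lemma int_coeffs_j6_series: "int_coeffs j6_series"
  and mod2_fps_j6_series: "mod2_fps j6_series = fps_dilate 4 cube_ratio_1_3 + fps_X"
proof -
  let ?A = "qpoch 2 * qpoch 3 ^ 3" and ?B = "qpoch 1 * qpoch 6 ^ 3"
  have A: "int_coeffs ?A" and B: "int_coeffs ?B" "?B $ 0 = 1"
    by (simp_all add: qpoch_eq_qpoch_fps int_coeffs_qpoch_fps int_coeffs_mult int_coeffs_power
        fps_power_zeroth)
  have AB: "int_coeffs (?A * inverse ?B)"
    using A int_coeffs_inverse[OF B] by (rule int_coeffs_mult)
  then show "int_coeffs j6_series"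
    unfolding j6_series_def by (rule int_coeffs_power)
  have "mod2_fps j6_series = (mod2_fps ?A * inverse (mod2_fps ?B)) ^ 3"
    unfolding j6_series_def mod2_fps_power[OF AB] mod2_fps_mult[OF A int_coeffs_inverse[OF B]]
      mod2_fps_inverse[OF B] ..
  also have "\<dots> = (qpoch_fps 2 * qpoch_fps 3 ^ 3 * inverse (qpoch_fps 1 * qpoch_fps 6 ^ 3)) ^ 3"
    by (simp add: qpoch_eq_qpoch_fps mod2_fps_mult mod2_fps_power int_coeffs_qpoch_fps
        int_coeffs_power mod2_fps_qpoch_fps)
  also have "\<dots> = fps_dilate 4 cube_ratio_1_3 + fps_X"
    by (rule j6_quotient_cube_mod2)
  finally show "mod2_fps j6_series = fps_dilate 4 cube_ratio_1_3 + fps_X" .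
qed

lemma int_coeffs_j6star_series: "int_coeffs j6star_series"
  and mod2_fps_j6star_series:
    "mod2_fps j6star_series = fps_dilate 4 cube_ratio_1_3 + fps_X ^ 2 * fps_dilate 4 cube_ratio_3_1"
proof -
  let ?A = "qpoch 1 * qpoch 3" and ?B = "qpoch 2 * qpoch 6"
  have A: "int_coeffs ?A" and B: "int_coeffs ?B" "?B $ 0 = 1"
    by (simp_all add: qpoch_eq_qpoch_fps int_coeffs_qpoch_fps int_coeffs_mult)
  have P: "int_coeffs P6"
    unfolding P6_def using A int_coeffs_inverse[OF B] by (rule int_coeffs_mult)
  have P6: "int_coeffs (P6 ^ 6)" "(P6 ^ 6) $ 0 = 1"
    using P by (simp_all add: int_coeffs_power P6_def qpoch_eq_qpoch_fps fps_power_zeroth)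
  have X6: "int_coeffs (6 * fps_X)"
    using int_coeffs_X_power[of 1] by (simp add: int_coeffs_mult)
  have X64: "int_coeffs (64 * fps_X ^ 2 * inverse (P6 ^ 6))"
    using int_coeffs_inverse[OF P6] by (simp add: int_coeffs_mult)
  show "int_coeffs j6star_series"
    unfolding j6star_series_def by (intro int_coeffs_add P6 X6 X64)
  have "mod2_fps j6star_series = mod2_fps (P6 ^ 6) + mod2_fps (6 * fps_X)
      + mod2_fps (64 * fps_X ^ 2 * inverse (P6 ^ 6))"
    unfolding j6star_series_def by (simp add: mod2_fps_add int_coeffs_add P6 X6 X64)
  also have "mod2_fps (6 * fps_X) = 0"
    using int_coeffs_X_power[of 1] mod2_fps_X_power[of 1] by (simp add: mod2_fps_mult)
  also have "mod2_fps (64 * fps_X ^ 2 * inverse (P6 ^ 6)) = 0"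
    using int_coeffs_inverse[OF P6] by (simp add: mod2_fps_mult int_coeffs_mult)
  also have "mod2_fps (P6 ^ 6) = (mod2_fps ?A * inverse (mod2_fps ?B)) ^ 6"
    unfolding P6_def mod2_fps_power[OF int_coeffs_mult[OF A int_coeffs_inverse[OF B]]]
      mod2_fps_mult[OF A int_coeffs_inverse[OF B]] mod2_fps_inverse[OF B] ..
  also have "\<dots> = (qpoch_fps 1 * qpoch_fps 3 * inverse (qpoch_fps 2 * qpoch_fps 6)) ^ 6"
    by (simp add: qpoch_eq_qpoch_fps mod2_fps_mult int_coeffs_qpoch_fps mod2_fps_qpoch_fps)
  also have "\<dots> = fps_dilate 4 cube_ratio_1_3 + fps_X ^ 2 * fps_dilate 4 cube_ratio_3_1"
    by (rule j6star_quotient_power_6_mod2)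
  finally show "mod2_fps j6star_series
      = fps_dilate 4 cube_ratio_1_3 + fps_X ^ 2 * fps_dilate 4 cube_ratio_3_1"
    by simp
qed

section \<open>Reading off the coefficients\<close>

lemma cube_ratio_1_3_nth:
  "cube_ratio_1_3 $ (6 * q + 3) = 0" "cube_ratio_1_3 $ (6 * q + 5) = 0"
  "cube_ratio_1_3 $ (6 * q + 1) = cube_ratio_3_1 $ (2 * q)"
proof -
  have nth: "cube_ratio_1_3 $ m = (if 6 dvd m then inverse (qpoch_fps 1) $ (m div 6) else 0)
      + (if m = 0 then 0 else if 3 dvd (m - 1) then cube_ratio_3_1 $ ((m - 1) div 3) else 0)" for m
    by (subst cube_ratio_1_3_dissection) (simp add: fps_dilate_nth)
  have "\<not> 6 dvd (6 * q + 3)" "\<not> 3 dvd (6 * q + 3 - 1)"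
    by presburger+
  then show "cube_ratio_1_3 $ (6 * q + 3) = 0"
    by (simp add: nth)
  have "\<not> 6 dvd (6 * q + 5)" "\<not> 3 dvd (6 * q + 5 - 1)"
    by presburger+
  then show "cube_ratio_1_3 $ (6 * q + 5) = 0"
    by (simp add: nth)
  have "\<not> 6 dvd (6 * q + 1)" "3 dvd (6 * q + 1 - 1)" "(6 * q + 1 - 1) div 3 = 2 * q"
    by presburger+
  then show "cube_ratio_1_3 $ (6 * q + 1) = cube_ratio_3_1 $ (2 * q)"
    by (simp add: nth)
qed

lemma mod2_fps_j6_series_nth:
  "mod2_fps j6_series $ m = (if 4 dvd m then cube_ratio_1_3 $ (m div 4) else 0) + (if m = 1 then 1 else 0)"
  by (simp add: mod2_fps_j6_series fps_dilate_nth)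

lemma mod2_fps_j6star_series_nth:
  "mod2_fps j6star_series $ m = (if 4 dvd m then cube_ratio_1_3 $ (m div 4) else 0)
     + (if 2 \<le> m \<and> 4 dvd (m - 2) then cube_ratio_3_1 $ ((m - 2) div 4) else 0)"
  by (simp add: mod2_fps_j6star_series fps_dilate_nth fps_X_power_mult_nth not_less)

lemma mod2_fps_j6_series_nth_eq_0: "\<not> 4 dvd m \<Longrightarrow> m \<noteq> 1 \<Longrightarrow> mod2_fps j6_series $ m = 0"
  by (simp add: mod2_fps_j6_series_nth)

lemma mod2_fps_j6star_series_nth_odd: "odd m \<Longrightarrow> mod2_fps j6star_series $ m = 0"
proof -
  assume "odd m"
  then have "\<not> 4 dvd m" "2 \<le> m \<longrightarrow> \<not> 4 dvd (m - 2)"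
    by presburger+
  then show ?thesis
    by (auto simp: mod2_fps_j6star_series_nth)
qed

lemma mod2_fps_j6_j6star_series_nth_eq_0:
  assumes "cube_ratio_1_3 $ k = 0" "k \<noteq> 0"
  shows "mod2_fps j6_series $ (4 * k) = 0" "mod2_fps j6star_series $ (4 * k) = 0"
proof -
  have "4 * k \<noteq> 1" "\<not> 4 dvd (4 * k - 2)"
    using assms(2) by presburger+
  then show "mod2_fps j6_series $ (4 * k) = 0" "mod2_fps j6star_series $ (4 * k) = 0"
    using assms(1) by (simp_all add: mod2_fps_j6_series_nth mod2_fps_j6star_series_nth)
qed

lemma mod2_fps_j6star_series_nth_eq_j6_series:
  "mod2_fps j6star_series $ (4 * k) = mod2_fps j6_series $ (4 * k)"
proof -
  have "4 * k \<noteq> 1" "2 \<le> 4 * k \<longrightarrow> \<not> 4 dvd (4 * k - 2)"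
    by presburger+
  then show ?thesis
    by (auto simp: mod2_fps_j6_series_nth mod2_fps_j6star_series_nth)
qed

lemma mod2_fps_j6star_series_nth_8_mult:
  "mod2_fps j6star_series $ (8 * n + 2) = mod2_fps j6_series $ (4 * (6 * n + 1))"
proof -
  have "\<not> 4 dvd (8 * n + 2)" "8 * n div 4 = 2 * n"
    by presburger+
  then show ?thesis
    using cube_ratio_1_3_nth(3)[of n] by (simp add: mod2_fps_j6_series_nth mod2_fps_j6star_series_nth)
qed

text \<open>Indices are shifted by one: J6 m is the coefficient of q^(m+1) in q (j_6 + 3) only for
  m \<noteq> 0, and J6star m that of q^(m+1) in q j_6^*.\<close>

lemma J6_even_iff: "m \<noteq> 0 \<Longrightarrow> J6 m / 2 \<in> \<int> \<longleftrightarrow> mod2_fps j6_series $ (m + 1) = 0"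
  by (simp add: J6_def half_coeff_in_Ints_iff[OF int_coeffs_j6_series])

lemma J6star_even_iff: "J6star m / 2 \<in> \<int> \<longleftrightarrow> mod2_fps j6star_series $ (m + 1) = 0"
  by (simp add: J6star_def half_coeff_in_Ints_iff[OF int_coeffs_j6star_series])

lemma J6star_J6_cong_iff:
  "k \<noteq> 0 \<Longrightarrow> (J6star m - J6 k) / 2 \<in> \<int> \<longleftrightarrow> mod2_fps j6star_series $ (m + 1) = mod2_fps j6_series $ (k + 1)"
  by (simp add: J6_def J6star_def half_coeff_diff_in_Ints_iff[OF int_coeffs_j6star_series int_coeffs_j6_series])

theorem theorem1p5:
  fixes n :: nat
  assumes "n \<ge> 1"
  shows "J6star (2*n) / 2 \<in> \<int> \<and> J6 (2*n) / 2 \<in> \<int>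
     \<and> J6 (4*n+1) / 2 \<in> \<int>
     \<and> J6star (24*n+11) / 2 \<in> \<int> \<and> J6star (24*n+19) / 2 \<in> \<int>
     \<and> J6 (24*n+11) / 2 \<in> \<int> \<and> J6 (24*n+19) / 2 \<in> \<int>
     \<and> (J6star (4*n-1) - J6 (4*n-1)) / 2 \<in> \<int>
     \<and> (J6star (8*n+1) - J6 (24*n+3)) / 2 \<in> \<int>"
proof (intro conjI)
  have n: "2 * n \<noteq> 0" "4 * n + 1 \<noteq> 0" "24 * n + 11 \<noteq> 0" "24 * n + 19 \<noteq> 0"
    "4 * n - 1 \<noteq> 0" "24 * n + 3 \<noteq> 0"
    using assms by simp_all
  have index: "24 * n + 11 + 1 = 4 * (6 * n + 3)" "24 * n + 19 + 1 = 4 * (6 * n + 5)"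
    "4 * n - 1 + 1 = 4 * n" "8 * n + 1 + 1 = 8 * n + 2" "24 * n + 3 + 1 = 4 * (6 * n + 1)"
    using assms by simp_all
  show "J6star (2*n) / 2 \<in> \<int>"
    unfolding J6star_even_iff by (rule mod2_fps_j6star_series_nth_odd) simp
  show "J6 (2*n) / 2 \<in> \<int>"
    unfolding J6_even_iff[OF n(1)] using assms by (intro mod2_fps_j6_series_nth_eq_0) presburger+
  show "J6 (4*n+1) / 2 \<in> \<int>"
    unfolding J6_even_iff[OF n(2)] by (intro mod2_fps_j6_series_nth_eq_0) presburger+
  show "J6star (24*n+11) / 2 \<in> \<int>" "J6 (24*n+11) / 2 \<in> \<int>"
    "J6star (24*n+19) / 2 \<in> \<int>" "J6 (24*n+19) / 2 \<in> \<int>"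
    unfolding J6star_even_iff J6_even_iff[OF n(3)] J6_even_iff[OF n(4)] index
    using mod2_fps_j6_j6star_series_nth_eq_0[OF cube_ratio_1_3_nth(1)]
      mod2_fps_j6_j6star_series_nth_eq_0[OF cube_ratio_1_3_nth(2)] by simp_all
  show "(J6star (4*n-1) - J6 (4*n-1)) / 2 \<in> \<int>"
    unfolding J6star_J6_cong_iff[OF n(5)] index by (rule mod2_fps_j6star_series_nth_eq_j6_series)
  show "(J6star (8*n+1) - J6 (24*n+3)) / 2 \<in> \<int>"
    unfolding J6star_J6_cong_iff[OF n(6)] index by (rule mod2_fps_j6star_series_nth_8_mult)
qed

end
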